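(* Let $d\ge 2$ and let $\gamma_1,\gamma_2\subset\mathbb{R}^d$ be irreducible real algebraic curves, neither of which is contained in a hyperplane. Suppose there exist an open interval $I\subset\mathbb{R}$, injective real analytic maps $\alpha_i:I\to\gamma_i$ ($i=1,2$) parameterizing arcs of $\gamma_i$, and an injective real analytic function $h$ defined on $\{x-y: x,y\in I\}$ such that $$\|\alpha_1(x)-\alpha_2(y)\| = h(x-y)\qquad\text{for all } x,y\in I.$$ Then each of $\gamma_1$ and $\gamma_2$ is contained in a quadric surface in $\mathbb{R}^d$.
   Context: A quadric surface in $\mathbb{R}^d$ is the zero set of a polynomial $q(\xi)=\sum_{1\le i\le j\le d}\sigma_{ij}\xi_i\xi_j+\sum_i\sigma_i\xi_i+\sigma$ that is not identically zero. *)

theory Defs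
  imports "HOL-Analysis.Analysis"
begin

definition poly_fun :: "(real^'n \<Rightarrow> real) \<Rightarrow> bool" where
  "poly_fun p \<longleftrightarrow> (\<exists>E :: ('n \<Rightarrow> nat) set. \<exists>c :: ('n \<Rightarrow> nat) \<Rightarrow> real. finite E \<and>
      (\<forall>x. p x = (\<Sum>e\<in>E. c e * (\<Prod>i\<in>UNIV. (x $ i) ^ (e i)))))"

definition algebraic_set :: "(real^'n) set \<Rightarrow> bool" where
  "algebraic_set Z \<longleftrightarrow> (\<exists>P. (\<forall>p\<in>P. poly_fun p) \<and> Z = {x. \<forall>p\<in>P. p x = 0})"

definition irreducible_algebraic_set :: "(real^'n) set \<Rightarrow> bool" where
  "irreducible_algebraic_set Z \<longleftrightarrow> algebraic_set Z \<and> Z \<noteq> {} \<and>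
     (\<forall>A B. algebraic_set A \<and> algebraic_set B \<and> Z = A \<union> B \<longrightarrow> Z = A \<or> Z = B)"

text \<open>An irreducible real algebraic curve: an irreducible algebraic set of dimension one,
  i.e. infinite, and every proper algebraic subset is finite (dimension 0).\<close>
definition irreducible_algebraic_curve :: "(real^'n) set \<Rightarrow> bool" where
  "irreducible_algebraic_curve Z \<longleftrightarrow> irreducible_algebraic_set Z \<and> infinite Z \<and>
     (\<forall>W. algebraic_set W \<and> W \<subset> Z \<longrightarrow> finite W)"

definition hyperplane :: "(real^'n) set \<Rightarrow> bool" where
  "hyperplane H \<longleftrightarrow> (\<exists>a b. a \<noteq> 0 \<and> H = {x. a \<bullet> x = b})"

text \<open>Quadric surface: zero set of a not identically zero polynomial of degree at most 2.
  The quadratic part \<Sum>_{i<=j} \<sigma>_ij x_i x_j is written as \<Sum>_{i,j} A_ij x_i x_j.\<close>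
definition quadric_poly :: "('n \<Rightarrow> 'n \<Rightarrow> real) \<Rightarrow> ('n \<Rightarrow> real) \<Rightarrow> real \<Rightarrow> real^'n \<Rightarrow> real" where
  "quadric_poly A b c x = (\<Sum>i\<in>UNIV. \<Sum>j\<in>UNIV. A i j * (x $ i) * (x $ j)) + (\<Sum>i\<in>UNIV. b i * (x $ i)) + c"

definition quadric_surface :: "(real^'n) set \<Rightarrow> bool" where
  "quadric_surface Q \<longleftrightarrow> (\<exists>A b c. (\<exists>x. quadric_poly A b c x \<noteq> 0) \<and> Q = {x. quadric_poly A b c x = 0})"

definition real_analytic_on :: "(real \<Rightarrow> 'a::real_normed_vector) \<Rightarrow> real set \<Rightarrow> bool" where
  "real_analytic_on f S \<longleftrightarrow> (\<forall>x0\<in>S. \<exists>r>0. \<exists>a :: nat \<Rightarrow> 'a.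
      \<forall>x. \<bar>x - x0\<bar> < r \<longrightarrow> (\<lambda>n. (x - x0) ^ n *\<^sub>R a n) sums f x)"

end

theory Submission
  imports Defs
begin

(* Moving both parameters by the same t keeps the distance constant, so differentiating
  \<parallel>\<alpha>1 (x + t) - \<alpha>2 (y + t)\<parallel>\<^sup>2 at t = 0 gives (\<alpha>1 x - \<alpha>2 y) \<bullet> (\<alpha>1' x - \<alpha>2' y) = 0 for all x, y.
  Subtracting this identity at y and at a fixed y0 leaves an equation that is linear in
  (\<alpha>1 x, \<alpha>1' x); as \<alpha>2 is not contained in a hyperplane, the differences \<alpha>2 y - \<alpha>2 y0 span
  R^d, and solving the system shows that \<alpha>1 satisfies an affine ODE \<alpha>1' = m + M \<alpha>1.
  Substituting this into the identity at y0 yields an equation of degree at most 2 for \<alpha>1.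
  If that polynomial vanishes identically, M is skew, so \<parallel>m + M \<alpha>1\<parallel> is constant, which is
  again a quadric equation; if this one vanishes identically too, M = 0 and the arc is a line,
  contradicting nondegeneracy. Finally an irreducible curve sharing infinitely many points with
  an algebraic set lies inside it. Analyticity of the \<alpha>i is used only for differentiability. *)

section \<open>Polynomials, algebraic sets and quadrics\<close>

definition monomial :: "('n \<Rightarrow> nat) \<Rightarrow> real^'n \<Rightarrow> real" where
  "monomial e x = (\<Prod>i\<in>UNIV. (x $ i) ^ (e i))"

lemma monomial_add: "monomial (\<lambda>i. e i + f i) x = monomial e x * monomial f x"
  by (simp add: monomial_def power_add prod.distrib)

lemma monomial_unit: "monomial (\<lambda>k. if k = i then 1 else 0) x = x $ i"
proof -
  have "monomial (\<lambda>k. if k = i then 1 else 0) x = (\<Prod>k\<in>UNIV. if k = i then x $ k else 1)"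
    unfolding monomial_def by (intro prod.cong) auto
  then show ?thesis by simp
qed

lemma poly_fun_sum_monomials:
  fixes e :: "'k \<Rightarrow> ('n::finite \<Rightarrow> nat)"
  assumes "finite K"
  shows "poly_fun (\<lambda>x. \<Sum>k\<in>K. c k * monomial (e k) x)"
proof -
  define c' where "c' f = (\<Sum>k\<in>{k\<in>K. e k = f}. c k)" for f
  have "(\<Sum>k\<in>K. c k * monomial (e k) x) = (\<Sum>f\<in>e ` K. c' f * (\<Prod>i\<in>UNIV. (x $ i) ^ (f i)))" for x
  proof -
    have "(\<Sum>k\<in>K. c k * monomial (e k) x) = (\<Sum>f\<in>e ` K. \<Sum>k\<in>{k\<in>K. e k = f}. c k * monomial (e k) x)"
      by (rule sum.image_gen[OF assms])
    also have "\<dots> = (\<Sum>f\<in>e ` K. c' f * (\<Prod>i\<in>UNIV. (x $ i) ^ (f i)))"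
      unfolding c'_def sum_distrib_right monomial_def by (intro sum.cong refl) auto
    finally show ?thesis .
  qed
  then show ?thesis
    unfolding poly_fun_def using assms by blast
qed

lemma poly_fun_add:
  assumes "poly_fun p" "poly_fun q"
  shows "poly_fun (\<lambda>x. p x + q x)"
proof -
  obtain E1 c1 where "finite E1" "\<And>x. p x = (\<Sum>e\<in>E1. c1 e * monomial e x)"
    using assms(1) unfolding poly_fun_def monomial_def by blast
  moreover obtain E2 c2 where "finite E2" "\<And>x. q x = (\<Sum>e\<in>E2. c2 e * monomial e x)"
    using assms(2) unfolding poly_fun_def monomial_def by blast
  moreover have "poly_fun (\<lambda>x. \<Sum>k\<in>E1 <+> E2. case_sum c1 c2 k * monomial (case_sum id id k) x)"
    by (rule poly_fun_sum_monomials) (use calculation in auto)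
  ultimately show ?thesis
    by (simp add: sum.Plus)
qed

lemma poly_fun_quadric_poly: "poly_fun (quadric_poly A b c)"
proof -
  define unit :: "'a \<Rightarrow> 'a \<Rightarrow> nat" where "unit i = (\<lambda>k. if k = i then 1 else 0)" for i
  have [simp]: "monomial (\<lambda>_. 0) x = 1" for x
    by (simp add: monomial_def)
  have "(\<Sum>ij\<in>UNIV. A (fst ij) (snd ij) * monomial (\<lambda>k. unit (fst ij) k + unit (snd ij) k) x)
      = (\<Sum>i\<in>UNIV. \<Sum>j\<in>UNIV. A i j * (x $ i) * (x $ j))" for x
    unfolding UNIV_Times_UNIV[symmetric] sum.cartesian_product
    by (simp add: monomial_add monomial_unit unit_def case_prod_beta mult.assoc)
  then have "quadric_poly A b c = (\<lambda>x.
      (\<Sum>ij\<in>UNIV. A (fst ij) (snd ij) * monomial (\<lambda>k. unit (fst ij) k + unit (snd ij) k) x)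
      + (\<Sum>i\<in>UNIV. b i * monomial (unit i) x) + (\<Sum>_\<in>{()}. c * monomial (\<lambda>_. 0) x))"
    by (simp add: fun_eq_iff quadric_poly_def monomial_unit unit_def)
  then show ?thesis
    by (simp only:) (intro poly_fun_add poly_fun_sum_monomials; simp)
qed

lemma quadric_poly_matrix:
  fixes M :: "real^'n::finite^'n"
  shows "quadric_poly (\<lambda>i j. M $ i $ j) (\<lambda>i. a $ i) c z = z \<bullet> (M *v z) + a \<bullet> z + c"
  by (simp add: quadric_poly_def inner_vec_def matrix_vector_mult_def sum_distrib_left mult_ac)

lemma algebraic_set_zero_set: "poly_fun p \<Longrightarrow> algebraic_set {x. p x = 0}"
  unfolding algebraic_set_def by (rule exI[of _ "{p}"]) auto

lemma algebraic_set_Int: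
  assumes "algebraic_set A" "algebraic_set B"
  shows "algebraic_set (A \<inter> B)"
proof -
  obtain P where "\<forall>p\<in>P. poly_fun p" "A = {x. \<forall>p\<in>P. p x = 0}"
    using assms(1) unfolding algebraic_set_def by blast
  moreover obtain P' where "\<forall>p\<in>P'. poly_fun p" "B = {x. \<forall>p\<in>P'. p x = 0}"
    using assms(2) unfolding algebraic_set_def by blast
  ultimately show ?thesis
    unfolding algebraic_set_def by (intro exI[of _ "P \<union> P'"]) auto
qed

lemma algebraic_set_hyperplane: "algebraic_set {x::real^'n::finite. a \<bullet> x = b}"
proof -
  have "{x::real^'n. a \<bullet> x = b} = {x. quadric_poly (\<lambda>_ _. 0) (\<lambda>i. a $ i) (- b) x = 0}"
    by (auto simp: quadric_poly_def inner_vec_def mult.commute)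
  then show ?thesis
    by (simp only:) (rule algebraic_set_zero_set[OF poly_fun_quadric_poly])
qed

lemma irreducible_algebraic_curve_subset:
  assumes "irreducible_algebraic_curve \<gamma>" "algebraic_set Z" "S \<subseteq> \<gamma> \<inter> Z" "infinite S"
  shows "\<gamma> \<subseteq> Z"
proof (rule ccontr)
  assume "\<not> \<gamma> \<subseteq> Z"
  moreover have "algebraic_set (\<gamma> \<inter> Z)"
    using assms(1,2) algebraic_set_Int
    by (auto simp: irreducible_algebraic_curve_def irreducible_algebraic_set_def)
  ultimately have "finite (\<gamma> \<inter> Z)"
    using assms(1) unfolding irreducible_algebraic_curve_def by blast
  then show False
    using assms(3,4) finite_subset by blast
qed

lemma infinite_subset_curve_not_in_hyperplane:
  assumes "irreducible_algebraic_curve \<gamma>" "\<forall>H. hyperplane H \<longrightarrow> \<not> \<gamma> \<subseteq> H"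
    and "S \<subseteq> \<gamma>" "infinite S" "a \<noteq> 0"
  shows "\<not> S \<subseteq> {z. a \<bullet> z = b}"
  using irreducible_algebraic_curve_subset[OF assms(1) algebraic_set_hyperplane, of S a b] assms
  unfolding hyperplane_def by blast

lemma curve_subset_quadric_surface:
  fixes M :: "real^'n::finite^'n"
  assumes "irreducible_algebraic_curve \<gamma>" "S \<subseteq> \<gamma>" "infinite S"
    and "\<forall>z\<in>S. z \<bullet> (M *v z) + a \<bullet> z + c = 0" "\<exists>z. z \<bullet> (M *v z) + a \<bullet> z + c \<noteq> 0"
  shows "\<exists>Q. quadric_surface Q \<and> \<gamma> \<subseteq> Q"
proof (intro exI conjI)
  define q where "q = quadric_poly (\<lambda>i j. M $ i $ j) (\<lambda>i. a $ i) c"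
  show "quadric_surface {x. q x = 0}"
    unfolding quadric_surface_def q_def
    by (intro exI[of _ "\<lambda>i j. M $ i $ j"] exI[of _ "\<lambda>i. a $ i"] exI[of _ c] conjI)
      (use assms(5) in \<open>simp_all add: quadric_poly_matrix\<close>)
  have "algebraic_set {x. q x = 0}"
    unfolding q_def by (rule algebraic_set_zero_set[OF poly_fun_quadric_poly])
  then show "\<gamma> \<subseteq> {x. q x = 0}"
    by (rule irreducible_algebraic_curve_subset[OF assms(1) _ _ assms(3)])
      (use assms(2,4) in \<open>auto simp: q_def quadric_poly_matrix\<close>)
qed

section \<open>Differentiating the distance identity\<close>

lemma has_vector_derivative_vec_componentwise:
  fixes f :: "real \<Rightarrow> real^'n::finite"
  assumes "\<And>i. ((\<lambda>x. f x $ i) has_field_derivative d i) (at x0)"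
  shows "(f has_vector_derivative (\<chi> i. d i)) (at x0)"
  unfolding has_vector_derivative_def
proof (subst has_derivative_componentwise_within, intro ballI)
  fix b :: "real^'n" assume "b \<in> Basis"
  then obtain i where b: "b = axis i 1" by (auto simp: Basis_vec_def)
  have "((\<lambda>x. f x $ i) has_derivative (\<lambda>h. d i * h)) (at x0)"
    using assms[of i] by (simp add: has_field_derivative_def)
  then show "((\<lambda>x. f x \<bullet> b) has_derivative (\<lambda>h. (h *\<^sub>R (\<chi> i. d i)) \<bullet> b)) (at x0)"
    by (simp add: b inner_axis mult.commute)
qed

lemma real_analytic_on_vec_nth:
  assumes "real_analytic_on f S"
  shows "real_analytic_on (\<lambda>x. f x $ i) S"
  unfolding real_analytic_on_def
proof
  fix x0 assume "x0 \<in> S"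
  then obtain r a where "r > 0" and f_sums: "\<And>x. \<bar>x - x0\<bar> < r \<Longrightarrow> (\<lambda>n. (x - x0) ^ n *\<^sub>R a n) sums f x"
    using assms unfolding real_analytic_on_def by blast
  have "(\<lambda>n. (x - x0) ^ n *\<^sub>R (a n $ i)) sums (f x $ i)" if "\<bar>x - x0\<bar> < r" for x
    using bounded_linear.sums[OF bounded_linear_vec_nth f_sums[OF that], of i] by simp
  with \<open>r > 0\<close> show "\<exists>r>0. \<exists>a. \<forall>x. \<bar>x - x0\<bar> < r \<longrightarrow> (\<lambda>n. (x - x0) ^ n *\<^sub>R a n) sums (f x $ i)"
    by (intro exI[of _ r] conjI exI[of _ "\<lambda>n. a n $ i"] allI impI) auto
qed

lemma real_analytic_on_has_field_derivative:
  fixes f :: "real \<Rightarrow> real"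
  assumes "real_analytic_on f S" "x0 \<in> S"
  shows "\<exists>d. (f has_field_derivative d) (at x0)"
proof -
  obtain r a where "r > 0" and f_sums: "\<And>x. \<bar>x - x0\<bar> < r \<Longrightarrow> (\<lambda>n. a n * (x - x0) ^ n) sums f x"
    using assms unfolding real_analytic_on_def real_scaleR_def mult.commute[of "_ ^ _"] by blast
  define g where "g t = (\<Sum>n. a n * t ^ n)" for t
  define d where "d = (\<Sum>n. diffs a n * 0 ^ n)"
  have "summable (\<lambda>n. a n * z ^ n)" if "norm z < r" for z
    using f_sums[of "z + x0"] that by (simp add: sums_iff)
  then have "(g has_field_derivative d) (at 0)"
    unfolding g_def d_def using \<open>r > 0\<close> by (intro termdiffs_strong'[of r]) auto
  moreover have "((\<lambda>x. x - x0) has_field_derivative 1) (at x0)"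
    by (auto intro!: derivative_eq_intros)
  ultimately have g_deriv: "((\<lambda>x. g (x - x0)) has_field_derivative d) (at x0)"
    using DERIV_chain2[of g d "\<lambda>x. x - x0" x0 1 UNIV] by simp
  have "g (x - x0) = f x" if "x \<in> ball x0 r" for x
  proof -
    have "\<bar>x - x0\<bar> < r"
      using that by (simp add: dist_real_def abs_minus_commute)
    then show ?thesis
      using f_sums unfolding g_def by (simp add: sums_iff)
  qed
  then have "(f has_field_derivative d) (at x0)"
    using \<open>r > 0\<close> by (intro has_field_derivative_transform_within_open[OF g_deriv open_ball]) auto
  then show ?thesis
    by blast
qed

lemma real_analytic_on_has_vector_derivative:
  fixes f :: "real \<Rightarrow> real^'n::finite"
  assumes "real_analytic_on f S" "x0 \<in> S"
  shows "\<exists>D. (f has_vector_derivative D) (at x0)"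
proof -
  have "\<forall>i. \<exists>d. ((\<lambda>x. f x $ i) has_field_derivative d) (at x0)"
    using real_analytic_on_has_field_derivative[OF real_analytic_on_vec_nth[OF assms(1)] assms(2)] by blast
  then obtain d where "\<And>i. ((\<lambda>x. f x $ i) has_field_derivative d i) (at x0)"
    by metis
  then show ?thesis
    using has_vector_derivative_vec_componentwise by blast
qed

lemma inner_derivatives_eq_0_if_norm_depends_on_difference:
  fixes P Q :: "real \<Rightarrow> 'a::real_inner"
  assumes "open I" "x \<in> I" "y \<in> I"
    and P': "(P has_vector_derivative P') (at x)" and Q': "(Q has_vector_derivative Q') (at y)"
    and norm_eq: "\<forall>x\<in>I. \<forall>y\<in>I. norm (P x - Q y) = h (x - y)"
  shows "(P x - Q y) \<bullet> (P' - Q') = 0"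
proof -
  define u where "u t = P (x + t) - Q (y + t)" for t
  have shift: "((\<lambda>t. z + t) has_vector_derivative 1) (at 0)" for z :: real
    by (auto intro!: derivative_eq_intros)
  have "((\<lambda>t. P (x + t)) has_vector_derivative P') (at 0)"
    "((\<lambda>t. Q (y + t)) has_vector_derivative Q') (at 0)"
    using vector_diff_chain_at[OF shift, of P P' x] vector_diff_chain_at[OF shift, of Q Q' y] P' Q'
    by (simp_all add: o_def)
  then have "(u has_vector_derivative P' - Q') (at 0)"
    unfolding u_def by (rule has_vector_derivative_diff)
  then have inner_deriv: "((\<lambda>t. u t \<bullet> u t) has_derivative
      (\<lambda>t. u 0 \<bullet> (t *\<^sub>R (P' - Q')) + (t *\<^sub>R (P' - Q')) \<bullet> u 0)) (at 0)"
    unfolding has_vector_derivative_def by (intro has_derivative_inner)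
  obtain e where "e > 0" "ball x e \<subseteq> I" "ball y e \<subseteq> I"
  proof -
    obtain e1 e2 where "e1 > 0" "ball x e1 \<subseteq> I" "e2 > 0" "ball y e2 \<subseteq> I"
      using assms(1-3) open_contains_ball by metis
    then show thesis
      using that[of "min e1 e2"] subset_ball[of "min e1 e2" e1 x] subset_ball[of "min e1 e2" e2 y]
      by auto
  qed
  have locally_constant: "u t \<bullet> u t = (h (x - y))\<^sup>2" if "t \<in> ball 0 e" for t
  proof -
    have "x + t \<in> ball x e" "y + t \<in> ball y e"
      using that by (auto simp: dist_real_def)
    then have "x + t \<in> I" "y + t \<in> I"
      using \<open>ball x e \<subseteq> I\<close> \<open>ball y e \<subseteq> I\<close> by blast+
    from norm_eq[rule_format, OF this] have "norm (u t) = h (x - y)"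
      unfolding u_def by simp
    then show ?thesis
      using power2_norm_eq_inner[of "u t"] by simp
  qed
  have "((\<lambda>t. u t \<bullet> u t) has_derivative (\<lambda>_. 0)) (at 0)"
  proof (rule has_derivative_transform_within_open[OF has_derivative_const open_ball])
    show "0 \<in> ball (0::real) e"
      using \<open>e > 0\<close> by simp
    show "(h (x - y))\<^sup>2 = u t \<bullet> u t" if "t \<in> ball 0 e" for t
      using locally_constant[OF that] by simp
  qed
  from fun_cong[OF has_derivative_unique[OF inner_deriv this], of 1]
  have "u 0 \<bullet> (P' - Q') + (P' - Q') \<bullet> u 0 = 0"
    by simp
  then show ?thesis
    unfolding u_def by (simp add: inner_commute)
qed

section \<open>The arc satisfies an affine ODE\<close>

lemma span_differences_eq_UNIV:
  fixes S :: "'a::euclidean_space set"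
  assumes not_flat: "\<And>a b. a \<noteq> 0 \<Longrightarrow> \<not> S \<subseteq> {z. a \<bullet> z = b}" and "p \<in> S"
  shows "span ((\<lambda>q. q - p) ` S) = UNIV"
proof (rule ccontr)
  assume "span ((\<lambda>q. q - p) ` S) \<noteq> UNIV"
  then have "dim ((\<lambda>q. q - p) ` S) < DIM('a)"
    by (metis dim_eq_full dim_subset_UNIV le_neq_implies_less)
  then obtain a where "a \<noteq> 0" and a: "\<And>v. v \<in> span ((\<lambda>q. q - p) ` S) \<Longrightarrow> orthogonal a v"
    using orthogonal_to_subspace_exists by blast
  have "S \<subseteq> {z. a \<bullet> z = a \<bullet> p}"
  proof
    fix q assume "q \<in> S"
    then have "orthogonal a (q - p)"
      by (intro a span_base) auto
    then show "q \<in> {z. a \<bullet> z = a \<bullet> p}"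
      by (simp add: orthogonal_def inner_diff_right)
  qed
  with not_flat[OF \<open>a \<noteq> 0\<close>] show False
    by blast
qed

lemma left_invertible_matrix_with_rows_in:
  fixes S :: "(real^'n::finite) set"
  assumes "span S = UNIV"
  obtains W V :: "real^'n^'n" where "\<And>k. W $ k \<in> S" "V ** W = mat 1"
proof -
  obtain B where B: "B \<subseteq> S" "independent B" "S \<subseteq> span B"
    by (rule maximal_independent_subset)
  have "span B = UNIV"
    using assms B(3) by (metis span_minimal subspace_span top.extremum_uniqueI)
  have "card B = dim S"
    by (rule basis_card_eq_dim[OF B(1,3,2)])
  also have "\<dots> = CARD('n)"
    using assms dim_eq_full[of S] by simp
  finally obtain b where b: "bij_betw b (UNIV::'n set) B"
    using finite_same_card_bij[of "UNIV::'n set" B] finiteI_independent[OF B(2)] by auto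
  define W :: "real^'n^'n" where "W = (\<chi> k. b k)"
  have "rows W = B"
    using b by (auto simp: rows_def row_def W_def bij_betw_def vec_lambda_eta)
  then obtain V where "V ** W = mat 1"
    using matrix_left_invertible_span_rows \<open>span B = UNIV\<close> by blast
  moreover have "W $ k \<in> S" for k
    using b B(1) by (auto simp: W_def bij_betw_def)
  ultimately show thesis
    using that by blast
qed

text \<open>Subtracting the equation at \<open>y0\<close> from the one at \<open>y\<close> cancels the term \<open>p \<bullet> p'\<close>, leaving
  a linear system for \<open>p'\<close> whose coefficient rows are the vectors \<open>Q y - Q y0\<close>.\<close>

lemma affine_solution_of_orthogonality_system:
  fixes Q Q' :: "'j \<Rightarrow> real^'n::finite"
  assumes "span ((\<lambda>y. Q y - Q y0) ` J) = UNIV" "y0 \<in> J"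
  obtains m and M :: "real^'n^'n"
    where "\<And>p p'. \<forall>y\<in>J. (p - Q y) \<bullet> (p' - Q' y) = 0 \<Longrightarrow> p' = m + M *v p"
proof -
  obtain W V :: "real^'n^'n" where W: "\<And>k. W $ k \<in> (\<lambda>y. Q y - Q y0) ` J" and V: "V ** W = mat 1"
    using left_invertible_matrix_with_rows_in[OF assms(1)] by blast
  have "\<forall>k. \<exists>y\<in>J. W $ k = Q y - Q y0"
    using W by blast
  then obtain y where y: "\<And>k. y k \<in> J" "\<And>k. W $ k = Q (y k) - Q y0"
    by metis
  define U :: "real^'n^'n" where "U = (\<chi> k. Q' y0 - Q' (y k))"
  define e :: "real^'n" where "e = (\<chi> k. Q (y k) \<bullet> Q' (y k) - Q y0 \<bullet> Q' y0)"
  show thesis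
  proof (rule that)
    fix p p' assume orth: "\<forall>y\<in>J. (p - Q y) \<bullet> (p' - Q' y) = 0"
    have "W *v p' = e + U *v p"
    proof (rule vec_eq_iff[THEN iffD2, rule_format])
      fix k
      have "(p - Q (y k)) \<bullet> (p' - Q' (y k)) = 0" "(p - Q y0) \<bullet> (p' - Q' y0) = 0"
        using orth y(1) assms(2) by auto
      then show "(W *v p') $ k = (e + U *v p) $ k"
        by (simp add: matrix_vector_mul_component y(2) U_def e_def
            inner_diff_left inner_diff_right inner_commute)
    qed
    then have "V *v (W *v p') = V *v (e + U *v p)"
      by simp
    then show "p' = V *v e + (V ** U) *v p"
      by (simp add: matrix_vector_mul_assoc V matrix_vector_right_distrib)
  qed
qed

section \<open>From the affine ODE to a quadric\<close>

lemma quadratic_part_eq_0: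
  fixes M :: "real^'n::finite^'n"
  assumes "\<And>z. z \<bullet> (M *v z) + a \<bullet> z + c = 0"
  shows "z \<bullet> (M *v z) = 0"
proof -
  have "z \<bullet> (M *v z) + a \<bullet> z + c = 0" "(- z) \<bullet> (M *v (- z)) + a \<bullet> (- z) + c = 0" "c = 0"
    using assms[of z] assms[of "- z"] assms[of 0] by simp_all
  moreover have "M *v (- z) = - (M *v z)"
    using matrix_vector_mult_diff_distrib[of M 0 z] by simp
  ultimately show ?thesis
    by simp
qed

lemma inner_self_affine_flow_constant:
  fixes P P' :: "real \<Rightarrow> real^'n::finite"
  assumes "is_interval I"
    and P': "\<forall>x\<in>I. (P has_vector_derivative P' x) (at x)" and ode: "\<forall>x\<in>I. P' x = m + M *v P x"
    and skew: "\<And>z. z \<bullet> (M *v z) = 0"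
  obtains C where "\<forall>x\<in>I. (m + M *v P x) \<bullet> (m + M *v P x) = C"
proof -
  define R where "R = (\<lambda>x. m + M *v P x)"
  have "((\<lambda>x. R x \<bullet> R x) has_derivative (\<lambda>_. 0)) (at x within I)" if "x \<in> I" for x
  proof -
    have "(P has_derivative (\<lambda>t. t *\<^sub>R P' x)) (at x)"
      using P' that by (simp add: has_vector_derivative_def)
    then have "((\<lambda>x. M *v P x) has_derivative (\<lambda>t. M *v (t *\<^sub>R P' x))) (at x)"
      by (rule bounded_linear.has_derivative[OF matrix_vector_mul_bounded_linear])
    then have R': "(R has_derivative (\<lambda>t. M *v (t *\<^sub>R P' x))) (at x)"
      unfolding R_def by (subst add.commute) (rule has_derivative_add_const)
    have "((\<lambda>x. R x \<bullet> R x) has_derivative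
        (\<lambda>t. R x \<bullet> (M *v (t *\<^sub>R P' x)) + (M *v (t *\<^sub>R P' x)) \<bullet> R x)) (at x)"
      by (rule has_derivative_inner[OF R' R'])
    moreover have "R x \<bullet> (M *v (t *\<^sub>R P' x)) = 0" for t
      using skew[of "R x"] ode that by (simp add: R_def matrix_vector_mult_scaleR)
    ultimately show ?thesis
      by (simp add: has_derivative_at_withinI inner_commute)
  qed
  then show thesis
    using has_derivative_zero_constant[OF is_interval_convex[OF assms(1)]] that
    unfolding R_def by blast
qed

lemma arc_in_hyperplane_if_derivative_constant:
  fixes P :: "real \<Rightarrow> 'a::euclidean_space"
  assumes "is_interval I" "2 \<le> DIM('a)" "\<forall>x\<in>I. (P has_vector_derivative m) (at x)"
  obtains a b where "a \<noteq> 0" "P ` I \<subseteq> {z. a \<bullet> z = b}"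
proof -
  have "((\<lambda>x. P x - x *\<^sub>R m) has_vector_derivative 0) (at x within I)" if "x \<in> I" for x
  proof -
    have "((\<lambda>x. x *\<^sub>R m) has_vector_derivative m) (at x)"
      by (auto intro!: derivative_eq_intros)
    from has_vector_derivative_diff[OF assms(3)[rule_format, OF that] this]
    show ?thesis
      by (simp add: has_vector_derivative_at_within)
  qed
  then obtain p where p: "\<And>x. x \<in> I \<Longrightarrow> P x - x *\<^sub>R m = p"
    using has_vector_derivative_zero_constant[OF is_interval_convex[OF assms(1)]] by blast
  obtain a where "a \<noteq> 0" "orthogonal m a"
    using orthogonal_to_vector_exists[OF assms(2)] by blast
  moreover have "P ` I \<subseteq> {z. a \<bullet> z = a \<bullet> p}"
  proof
    fix z assume "z \<in> P ` I"
    then obtain x where "x \<in> I" "z = P x"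
      by blast
    then have "z = p + x *\<^sub>R m"
      using p by (simp add: algebra_simps)
    then show "z \<in> {z. a \<bullet> z = a \<bullet> p}"
      using \<open>orthogonal m a\<close> by (simp add: orthogonal_def inner_add_right inner_commute)
  qed
  ultimately show thesis
    using that by blast
qed

lemma arc_in_quadric_if_skew_affine_ode:
  fixes P P' :: "real \<Rightarrow> real^'n::finite"
  assumes "2 \<le> CARD('n)" "irreducible_algebraic_curve \<gamma>" "\<forall>H. hyperplane H \<longrightarrow> \<not> \<gamma> \<subseteq> H"
    and "is_interval I" "P ` I \<subseteq> \<gamma>" "infinite (P ` I)"
    and P': "\<forall>x\<in>I. (P has_vector_derivative P' x) (at x)" and ode: "\<forall>x\<in>I. P' x = m + M *v P x"
    and "\<And>z. z \<bullet> (M *v z) = 0"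
  shows "\<exists>Q. quadric_surface Q \<and> \<gamma> \<subseteq> Q"
proof -
  obtain C where C: "\<forall>x\<in>I. (m + M *v P x) \<bullet> (m + M *v P x) = C"
    using inner_self_affine_flow_constant[OF assms(4) P' ode assms(9)] by blast
  have norm_sq: "(M *v z) \<bullet> (M *v z) = z \<bullet> ((transpose M ** M) *v z)" for z
    by (metis dot_lmul_matrix transpose_matrix_vector matrix_vector_mul_assoc inner_commute)
  have q: "(m + M *v z) \<bullet> (m + M *v z) - C
      = z \<bullet> ((transpose M ** M) *v z) + (2 *\<^sub>R (m v* M)) \<bullet> z + (m \<bullet> m - C)" for z
    by (simp add: norm_sq inner_add_left inner_add_right dot_lmul_matrix inner_commute[of "M *v z" m])
  show ?thesis
  proof (cases "\<forall>z. (m + M *v z) \<bullet> (m + M *v z) - C = 0")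
    case False
    have "\<forall>z\<in>P ` I. z \<bullet> ((transpose M ** M) *v z) + (2 *\<^sub>R (m v* M)) \<bullet> z + (m \<bullet> m - C) = 0"
      using C q by (metis (no_types, lifting) diff_self imageE)
    moreover obtain z where "(m + M *v z) \<bullet> (m + M *v z) - C \<noteq> 0"
      using False by blast
    then have "\<exists>z. z \<bullet> ((transpose M ** M) *v z) + (2 *\<^sub>R (m v* M)) \<bullet> z + (m \<bullet> m - C) \<noteq> 0"
      using q[of z] by (intro exI[of _ z]) linarith
    ultimately show ?thesis
      by (rule curve_subset_quadric_surface[OF assms(2,5,6)])
  next
    case True
    have "z \<bullet> ((transpose M ** M) *v z) = 0" for z
    proof (rule quadratic_part_eq_0)
      show "w \<bullet> ((transpose M ** M) *v w) + (2 *\<^sub>R (m v* M)) \<bullet> w + (m \<bullet> m - C) = 0" for w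
        using True[rule_format, of w] q[of w] by linarith
    qed
    then have "M *v z = 0" for z
      using norm_sq by (metis inner_eq_zero_iff)
    then have const: "\<forall>x\<in>I. (P has_vector_derivative m) (at x)"
      using P' ode by simp
    have "2 \<le> DIM(real^'n)"
      using assms(1) by simp
    then obtain a b where "a \<noteq> 0" "P ` I \<subseteq> {z. a \<bullet> z = b}"
      by (rule arc_in_hyperplane_if_derivative_constant[OF assms(4) _ const])
    then show ?thesis
      using infinite_subset_curve_not_in_hyperplane[OF assms(2,3,5,6)] by blast
  qed
qed

lemma inner_vector_matrix_mult: "(x::real^'n::finite) \<bullet> (y v* A) = y \<bullet> (A *v x)"
  by (metis dot_lmul_matrix inner_commute)

lemma arc_in_quadric_if_orthogonal_to_spanning_arc:
  fixes P P' :: "real \<Rightarrow> real^'n::finite" and Q Q' :: "'j \<Rightarrow> real^'n"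
  assumes "2 \<le> CARD('n)" "irreducible_algebraic_curve \<gamma>" "\<forall>H. hyperplane H \<longrightarrow> \<not> \<gamma> \<subseteq> H"
    and "is_interval I" "P ` I \<subseteq> \<gamma>" "infinite (P ` I)"
    and P': "\<forall>x\<in>I. (P has_vector_derivative P' x) (at x)"
    and "span ((\<lambda>y. Q y - Q y0) ` J) = UNIV" "y0 \<in> J"
    and orth: "\<forall>x\<in>I. \<forall>y\<in>J. (P x - Q y) \<bullet> (P' x - Q' y) = 0"
  shows "\<exists>Z. quadric_surface Z \<and> \<gamma> \<subseteq> Z"
proof -
  obtain m M where ode: "\<forall>x\<in>I. P' x = m + M *v P x"
    using affine_solution_of_orthogonality_system[OF assms(8,9), of Q'] orth by metis
  define a where "a = m - Q y0 v* M - Q' y0"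
  define c where "c = Q y0 \<bullet> Q' y0 - Q y0 \<bullet> m"
  have on_arc: "P x \<bullet> (M *v P x) + a \<bullet> P x + c = 0" if "x \<in> I" for x
  proof -
    have "(P x - Q y0) \<bullet> (m + M *v P x - Q' y0) = 0"
      using orth ode that assms(9) by metis
    then show ?thesis
      by (simp add: a_def c_def inner_diff_left inner_diff_right inner_add_left inner_add_right
          inner_vector_matrix_mult inner_commute)
  qed
  show ?thesis
  proof (cases "\<forall>z. z \<bullet> (M *v z) + a \<bullet> z + c = 0")
    case True
    then have "z \<bullet> (M *v z) = 0" for z
      using quadratic_part_eq_0 by blast
    then show ?thesis
      by (rule arc_in_quadric_if_skew_affine_ode[OF assms(1-7) ode])
  next
    case False
    then show ?thesis
      using curve_subset_quadric_surface[OF assms(2,5,6)] on_arc by blast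
  qed
qed

lemma curve_in_quadric_if_distance_depends_on_difference:
  fixes \<alpha> \<beta> :: "real \<Rightarrow> real^'n::finite"
  assumes "2 \<le> CARD('n)"
    and "irreducible_algebraic_curve \<gamma>" "\<forall>H. hyperplane H \<longrightarrow> \<not> \<gamma> \<subseteq> H"
    and "irreducible_algebraic_curve \<delta>" "\<forall>H. hyperplane H \<longrightarrow> \<not> \<delta> \<subseteq> H"
    and "is_interval I" "open I" "I \<noteq> {}"
    and "inj_on \<alpha> I" "\<alpha> ` I \<subseteq> \<gamma>" "real_analytic_on \<alpha> I"
    and "inj_on \<beta> I" "\<beta> ` I \<subseteq> \<delta>" "real_analytic_on \<beta> I"
    and "\<forall>x\<in>I. \<forall>y\<in>I. norm (\<alpha> x - \<beta> y) = h (x - y)"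
  shows "\<exists>Q. quadric_surface Q \<and> \<gamma> \<subseteq> Q"
proof -
  have "infinite I"
    using finite_imp_not_open assms(7,8) by blast
  then have infinite: "infinite (\<alpha> ` I)" "infinite (\<beta> ` I)"
    using assms(9,12) finite_image_iff by auto
  obtain \<alpha>' where \<alpha>': "\<forall>x\<in>I. (\<alpha> has_vector_derivative \<alpha>' x) (at x)"
    using real_analytic_on_has_vector_derivative[OF assms(11)] by metis
  obtain \<beta>' where \<beta>': "\<forall>y\<in>I. (\<beta> has_vector_derivative \<beta>' y) (at y)"
    using real_analytic_on_has_vector_derivative[OF assms(14)] by metis
  have orth: "\<forall>x\<in>I. \<forall>y\<in>I. (\<alpha> x - \<beta> y) \<bullet> (\<alpha>' x - \<beta>' y) = 0"
    using inner_derivatives_eq_0_if_norm_depends_on_difference[OF assms(7) _ _ _ _ assms(15)] \<alpha>' \<beta>'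
    by blast
  obtain y0 where "y0 \<in> I"
    using assms(8) by blast
  have not_flat: "\<not> \<beta> ` I \<subseteq> {z. a \<bullet> z = b}" if "a \<noteq> 0" for a b
    by (rule infinite_subset_curve_not_in_hyperplane[OF assms(4,5,13) infinite(2) that])
  have "span ((\<lambda>q. q - \<beta> y0) ` \<beta> ` I) = UNIV"
    by (rule span_differences_eq_UNIV[OF not_flat imageI[OF \<open>y0 \<in> I\<close>]])
  then have "span ((\<lambda>y. \<beta> y - \<beta> y0) ` I) = UNIV"
    by (simp add: image_image)
  from arc_in_quadric_if_orthogonal_to_spanning_arc[OF assms(1-3,6,10) infinite(1) \<alpha>' this \<open>y0 \<in> I\<close> orth]
  show ?thesis .
qed

theorem mainTheorem7:
  fixes \<gamma>1 \<gamma>2 :: "(real^'n) set"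
    and I :: "real set"
    and \<alpha>1 \<alpha>2 :: "real \<Rightarrow> real^'n"
    and h :: "real \<Rightarrow> real"
  assumes "CARD('n) \<ge> 2"
    and "irreducible_algebraic_curve \<gamma>1" and "irreducible_algebraic_curve \<gamma>2"
    and "\<forall>H. hyperplane H \<longrightarrow> \<not> \<gamma>1 \<subseteq> H"
    and "\<forall>H. hyperplane H \<longrightarrow> \<not> \<gamma>2 \<subseteq> H"
    and "is_interval I" "open I" "I \<noteq> {}"
    and "inj_on \<alpha>1 I" "\<alpha>1 ` I \<subseteq> \<gamma>1" "real_analytic_on \<alpha>1 I"
    and "inj_on \<alpha>2 I" "\<alpha>2 ` I \<subseteq> \<gamma>2" "real_analytic_on \<alpha>2 I"
    and "inj_on h {x - y | x y. x \<in> I \<and> y \<in> I}"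
    and "real_analytic_on h {x - y | x y. x \<in> I \<and> y \<in> I}"
    and "\<forall>x\<in>I. \<forall>y\<in>I. norm (\<alpha>1 x - \<alpha>2 y) = h (x - y)"
  shows "(\<exists>Q. quadric_surface Q \<and> \<gamma>1 \<subseteq> Q) \<and> (\<exists>Q. quadric_surface Q \<and> \<gamma>2 \<subseteq> Q)"
proof
  show "\<exists>Q. quadric_surface Q \<and> \<gamma>1 \<subseteq> Q"
    by (rule curve_in_quadric_if_distance_depends_on_difference[OF assms(1,2,4,3,5,6-14,17)])
  have "\<forall>y\<in>I. \<forall>x\<in>I. norm (\<alpha>2 y - \<alpha>1 x) = h (- (y - x))"
    using assms(17) by (simp add: norm_minus_commute)
  then show "\<exists>Q. quadric_surface Q \<and> \<gamma>2 \<subseteq> Q"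
    by (rule curve_in_quadric_if_distance_depends_on_difference[OF assms(1,3,5,2,4,6-8,12-14,9-11)])
qed

end
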